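(* Let $P_7$ be the prototype graph and, for every odd positive integer $n$, let $\phi_n:P_7\to P_7$ be the prototype map. Then every $\phi_n$ ($n$ odd and positive) is a homotopy equivalence.
   Context: The prototype graph $P_7$ has two vertices $v_0,v_1$ and seven edges $a,b,c,d,e,f,g$, each oriented from $v_0$ to $v_1$; an uppercase letter $A,\dots,G$ denotes the corresponding edge traversed in the opposite direction, and a word denotes the edge path traversing these edges in order. The prototype maps are the graph maps $P_7\to P_7$ fixing $v_0$ and $v_1$ defined by: $\phi_1=\mathrm{id}$, and for each integer $m\ge0$, $\phi_{3+2m}$ sends $a\mapsto aG(aB)^ma$, $b\mapsto bD(bC)^mb$, $c\mapsto cF(cA)^mc$, $d\mapsto aB(aB)^ma$, $e\mapsto cB(aB)^ma$, $f\mapsto aC(aB)^ma$, $g\mapsto bE(bA)^mb$ (each edge is mapped onto the indicated edge path). *)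

theory Defs
  imports "HOL-Analysis.Analysis"
begin

text \<open>Geometric realization of the prototype graph P_7 as a subspace of the plane.
  Vertices: v0 = (0,0), v1 = (1,0).  Edges a,b,c,d,e,f,g are numbered 0..6;
  edge i is the arc t \<mapsto> (t, i*t*(1-t)), t in [0,1], oriented from v0 to v1.
  Distinct arcs meet only in the two vertices.\<close>

definition arc :: "nat \<Rightarrow> real \<Rightarrow> real \<times> real" where
  "arc i t = (t, real i * t * (1 - t))"

definition P7 :: "(real \<times> real) set" where
  "P7 = {arc i t | i t. i < 7 \<and> 0 \<le> t \<and> t \<le> 1}"

definition P7_top :: "(real \<times> real) topology" where
  "P7_top = top_of_set P7"

text \<open>A letter is an edge together with a direction: (i, True) is edge i traversed
  from v0 to v1 (lowercase), (i, False) is edge i traversed backwards (uppercase).\<close>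

type_synonym letter = "nat \<times> bool"

definition letter_path :: "letter \<Rightarrow> real \<Rightarrow> real \<times> real" where
  "letter_path l s = arc (fst l) (if snd l then s else 1 - s)"

text \<open>The edge path w parametrized over [0,1], each letter taking equal time.\<close>
definition word_path :: "letter list \<Rightarrow> real \<Rightarrow> real \<times> real" where
  "word_path w t =
     (let L = length w; k = min (nat \<lfloor>t * real L\<rfloor>) (L - 1)
      in letter_path (w ! k) (t * real L - real k))"

text \<open>The graph map P_7 \<rightarrow> P_7 fixing v0 and v1 which sends edge i onto the edge path W i.\<close>
definition graph_map :: "(nat \<Rightarrow> letter list) \<Rightarrow> real \<times> real \<Rightarrow> real \<times> real" where
  "graph_map W p =
     (if fst p = 0 then (0, 0)
      else if fst p = 1 then (1, 0)
      else word_path (W (THE i. i < 7 \<and> snd p = real i * fst p * (1 - fst p))) (fst p))"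

abbreviation lo :: "nat \<Rightarrow> letter" where "lo i \<equiv> (i, True)"
abbreviation up :: "nat \<Rightarrow> letter" where "up i \<equiv> (i, False)"

text \<open>Images of the edges under phi_{3+2m}; a=0,b=1,c=2,d=3,e=4,f=5,g=6.\<close>
definition proto_word :: "nat \<Rightarrow> nat \<Rightarrow> letter list" where
  "proto_word m i =
    (let aB = concat (replicate m [lo 0, up 1]);
         bC = concat (replicate m [lo 1, up 2]);
         cA = concat (replicate m [lo 2, up 0]);
         bA = concat (replicate m [lo 1, up 0])
     in if i = 0 then [lo 0, up 6] @ aB @ [lo 0]
        else if i = 1 then [lo 1, up 3] @ bC @ [lo 1]
        else if i = 2 then [lo 2, up 5] @ cA @ [lo 2]
        else if i = 3 then [lo 0, up 1] @ aB @ [lo 0]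
        else if i = 4 then [lo 2, up 1] @ aB @ [lo 0]
        else if i = 5 then [lo 0, up 2] @ aB @ [lo 0]
        else [lo 1, up 4] @ bA @ [lo 1])"

definition proto_map :: "nat \<Rightarrow> real \<times> real \<Rightarrow> real \<times> real" where
  "proto_map n = (if n = 1 then id else graph_map (proto_word ((n - 3) div 2)))"

definition homotopy_equivalence :: "'a topology \<Rightarrow> 'b topology \<Rightarrow> ('a \<Rightarrow> 'b) \<Rightarrow> bool" where
  "homotopy_equivalence X Y f \<longleftrightarrow>
     continuous_map X Y f \<and>
     (\<exists>g. continuous_map Y X g \<and>
          homotopic_with (\<lambda>x. True) X X (g \<circ> f) id \<and>
          homotopic_with (\<lambda>x. True) Y Y (f \<circ> g) id)"

end

theory Submission
  imports Defs
begin

text \<open>Edge \<open>a\<close> is a spanning tree of \<open>P\<^sub>7\<close>, so a path \<open>p\<close> from \<open>v\<^sub>0\<close> to \<open>v\<^sub>1\<close> is determined up to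
  homotopy rel endpoints by the class of the loop \<open>p A\<close> in \<open>\<pi>\<^sub>1(P\<^sub>7, v\<^sub>0)\<close>, and a self-map of
  \<open>P\<^sub>7\<close> that sends every edge \<open>e\<close> to a path \<open>p\<close> with \<open>[p A] = [e A]\<close> is homotopic to the identity
  (the edgewise homotopies paste together). For a graph map \<open>f\<close>, the class \<open>[f(e) A]\<close> is the
  product of the generators \<open>x\<^sub>i = [e\<^sub>i A]\<close> and their inverses read off the word \<open>f(e)\<close>, and
  \<open>f\<^sub>*\<close> sends \<open>x\<^sub>i\<close> to \<open>[f(e\<^sub>i) A] [f(a) A]\<^sup>-\<^sup>1\<close>. So it suffices to exhibit a graph map \<open>\<psi>\<close> for
  which \<open>\<psi> \<circ> \<phi>\<^sub>n\<close> and \<open>\<phi>\<^sub>n \<circ> \<psi>\<close> satisfy this criterion; the identities required hold in every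
  group and are checked by normalising words.\<close>

section \<open>Edge paths in \<open>P\<^sub>7\<close>\<close>

lemma arc_0 [simp]: "arc i 0 = (0, 0)" and arc_1 [simp]: "arc i 1 = (1, 0)"
  by (simp_all add: arc_def)

lemma fst_arc [simp]: "fst (arc i t) = t"
  by (simp add: arc_def)

lemma continuous_on_arc: "continuous_on S (arc i)"
  unfolding arc_def by (intro continuous_intros)

lemma path_arc [simp]: "path (arc i)"
  by (simp add: path_def continuous_on_arc)

lemma pathstart_arc [simp]: "pathstart (arc i) = (0, 0)"
  and pathfinish_arc [simp]: "pathfinish (arc i) = (1, 0)"
  by (simp_all add: pathstart_def pathfinish_def)

lemma arc_eq_arc_imp_eq:
  assumes "0 < t" "t < 1" "arc i t = arc j t"
  shows "i = j"
proof -
  have "real i * (t * (1 - t)) = real j * (t * (1 - t))"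
    using assms(3) by (simp add: arc_def mult.assoc)
  moreover have "t * (1 - t) \<noteq> 0"
    using assms(1,2) by simp
  ultimately show ?thesis
    by simp
qed

definition edge :: "nat \<Rightarrow> (real \<times> real) set" where
  "edge i = arc i ` {0..1}"

lemma P7_eq_Union_edge: "P7 = (\<Union>i<7. edge i)"
  unfolding P7_def edge_def by fastforce

lemma edge_subset_P7: "i < 7 \<Longrightarrow> edge i \<subseteq> P7"
  by (auto simp: P7_eq_Union_edge)

lemma path_image_arc: "path_image (arc i) = edge i"
  by (simp add: path_image_def edge_def)

lemma closed_edge: "closed (edge i)"
  unfolding edge_def by (intro compact_imp_closed compact_continuous_image continuous_on_arc compact_Icc)

lemma edgeD: "p \<in> edge i \<Longrightarrow> p = arc i (fst p) \<and> fst p \<in> {0..1}"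
  by (auto simp: edge_def)

definition path01 :: "(real \<Rightarrow> real \<times> real) \<Rightarrow> bool" where
  "path01 p \<longleftrightarrow> path p \<and> path_image p \<subseteq> P7 \<and> pathstart p = (0, 0) \<and> pathfinish p = (1, 0)"

definition path10 :: "(real \<Rightarrow> real \<times> real) \<Rightarrow> bool" where
  "path10 p \<longleftrightarrow> path p \<and> path_image p \<subseteq> P7 \<and> pathstart p = (1, 0) \<and> pathfinish p = (0, 0)"

definition loop0 :: "(real \<Rightarrow> real \<times> real) \<Rightarrow> bool" where
  "loop0 p \<longleftrightarrow> path p \<and> path_image p \<subseteq> P7 \<and> pathstart p = (0, 0) \<and> pathfinish p = (0, 0)"

lemma path01_arc: "i < 7 \<Longrightarrow> path01 (arc i)"
  by (simp add: path01_def path_image_arc edge_subset_P7)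

lemma path10_reversepath: "path01 p \<Longrightarrow> path10 (reversepath p)"
  by (simp add: path01_def path10_def)

lemma loop0_join: "path01 p \<Longrightarrow> path10 q \<Longrightarrow> loop0 (p +++ q)"
  by (simp add: path01_def path10_def loop0_def path_image_join)

lemma loop0_join_loop0: "loop0 p \<Longrightarrow> loop0 q \<Longrightarrow> loop0 (p +++ q)"
  by (simp add: loop0_def path_image_join)

lemma loop0_homotopic: "loop0 p \<Longrightarrow> homotopic_paths P7 p q \<Longrightarrow> loop0 q"
  unfolding loop0_def
  by (metis homotopic_paths_imp_path homotopic_paths_imp_subset
      homotopic_paths_imp_pathstart homotopic_paths_imp_pathfinish)

definition vertex :: "bool \<Rightarrow> real \<times> real" where
  "vertex b = (if b then (0, 0) else (1, 0))"

lemma vertex_simps [simp]: "vertex True = (0, 0)" "vertex False = (1, 0)"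
  by (simp_all add: vertex_def)

lemma letter_path_lo [simp]: "letter_path (lo i) = arc i"
  by (rule ext) (simp add: letter_path_def)

lemma letter_path_up [simp]: "letter_path (up i) = reversepath (arc i)"
  by (rule ext) (simp add: letter_path_def reversepath_def)

lemma path_letter_path [simp]: "path (letter_path l)"
  and pathstart_letter_path [simp]: "pathstart (letter_path l) = vertex (snd l)"
  and pathfinish_letter_path [simp]: "pathfinish (letter_path l) = vertex (\<not> snd l)"
  by (cases l; cases "snd l"; simp)+

lemma path_image_letter_path: "fst l < 7 \<Longrightarrow> path_image (letter_path l) \<subseteq> P7"
  by (cases l; cases "snd l") (auto simp: path_image_arc edge_subset_P7)

fun edge_word :: "bool \<Rightarrow> letter list \<Rightarrow> bool" where
  "edge_word b [] = True"
| "edge_word b (l # w) \<longleftrightarrow> snd l = b \<and> fst l < 7 \<and> edge_word (\<not> b) w"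

lemma edge_word_append:
  "edge_word b (u @ v) \<longleftrightarrow> edge_word b u \<and> edge_word (if even (length u) then b else \<not> b) v"
  by (induction u arbitrary: b) auto

lemma word_path_singleton: "word_path [l] t = letter_path l t"
  by (simp add: word_path_def)

lemma word_path_Cons:
  assumes "w \<noteq> []" and "0 \<le> t"
  shows "word_path (l # w) t =
    (if t * (real (length w) + 1) < 1 then letter_path l (t * (real (length w) + 1))
     else word_path w ((t * (real (length w) + 1) - 1) / real (length w)))"
proof -
  define N where "N = length w"
  have N: "N \<ge> 1"
    using assms(1) by (simp add: N_def Suc_le_eq)
  show ?thesis
  proof (cases "t * (real N + 1) < 1")
    case True
    then have "\<lfloor>t * (real N + 1)\<rfloor> = 0"
      using assms(2) by (simp add: floor_eq_iff)
    then show ?thesis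
      using True by (simp add: word_path_def N_def add.commute)
  next
    case False
    define k where "k = min (nat \<lfloor>t * (real N + 1)\<rfloor>) N"
    have k1: "k \<ge> 1"
      using False N unfolding k_def by linarith
    have "min (nat \<lfloor>t * real (length (l # w))\<rfloor>) (length (l # w) - 1) = k"
      by (simp add: k_def N_def add.commute)
    then have lhs: "word_path (l # w) t = letter_path (w ! (k - 1)) (t * (real N + 1) - real k)"
      using k1 by (simp add: word_path_def Let_def N_def add.commute nth_Cons')
    define t' where "t' = (t * (real N + 1) - 1) / real N"
    have t': "t' * real N = t * (real N + 1) - 1"
      using N by (simp add: t'_def)
    then have "min (nat \<lfloor>t' * real N\<rfloor>) (N - 1) = k - 1"
      unfolding k_def by (simp add: nat_diff_distrib' min_diff)
    then have "word_path w t' = letter_path (w ! (k - 1)) (t * (real N + 1) - real k)"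
      using k1 t' by (simp add: word_path_def N_def[symmetric] of_nat_diff)
    then show ?thesis
      using False lhs by (simp add: N_def t'_def)
  qed
qed

text \<open>In \<^term>\<open>word_path (l # w)\<close> the letter \<open>l\<close> takes the time \<open>[0, 1/(N+1)]\<close>, where \<open>N\<close> is the
  length of \<open>w\<close>; in \<^term>\<open>letter_path l +++ word_path w\<close> it takes \<open>[0, 1/2]\<close>.\<close>

definition cons_reparam :: "nat \<Rightarrow> real \<Rightarrow> real" where
  "cons_reparam N t =
    (if t * (real N + 1) \<le> 1 then t * (real N + 1) / 2
     else 1/2 + (t * (real N + 1) - 1) / (2 * real N))"

lemma cons_reparam_in_01:
  assumes "N \<ge> 1" "t \<in> {0..1}"
  shows "cons_reparam N t \<in> {0..1}"
proof (cases "t * (real N + 1) \<le> 1")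
  case False
  have "t * real N \<le> real N"
    using assms(2) by (simp add: mult_left_le_one_le)
  then have "t * (real N + 1) - 1 \<le> real N"
    using assms(2) by (simp add: algebra_simps)
  then have "(t * (real N + 1) - 1) / (2 * real N) \<le> real N / (2 * real N)"
    by (intro divide_right_mono) auto
  also have "\<dots> = 1/2"
    using assms(1) by simp
  finally have "(t * (real N + 1) - 1) / (2 * real N) \<le> 1/2" .
  moreover have "0 \<le> (t * (real N + 1) - 1) / (2 * real N)"
    using False by simp
  ultimately show ?thesis
    using False by (simp add: cons_reparam_def del: times_divide_eq_left divide_le_eq_1)
qed (use assms in \<open>simp add: cons_reparam_def\<close>)

lemma word_path_Cons_eq_join:
  assumes "w \<noteq> []" "t \<in> {0..1}" "pathfinish (letter_path l) = pathstart (word_path w)"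
  shows "word_path (l # w) t = (letter_path l +++ word_path w) (cons_reparam (length w) t)"
proof -
  define N where "N = length w"
  have N: "real N \<ge> 1"
    using assms(1) by (simp add: N_def Suc_le_eq)
  consider "t * (real N + 1) < 1" | "t * (real N + 1) = 1" | "t * (real N + 1) > 1"
    by linarith
  then show ?thesis
  proof cases
    case 1
    then show ?thesis
      using assms(2) word_path_Cons[OF assms(1)] by (simp add: cons_reparam_def joinpaths_def N_def)
  next
    case 2
    have "word_path w 0 = letter_path l 1"
      using assms(3) by (simp add: pathstart_def pathfinish_def)
    then show ?thesis
      using assms(2) word_path_Cons[OF assms(1)] 2 by (simp add: cons_reparam_def joinpaths_def N_def)
  next
    case 3
    define s where "s = (t * (real N + 1) - 1) / (2 * real N)"
    have "s > 0"
      using 3 N by (simp add: s_def)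
    moreover have "cons_reparam N t = 1/2 + s"
      using 3 by (simp add: cons_reparam_def s_def)
    moreover have "2 * (1/2 + s) - 1 = (t * (real N + 1) - 1) / real N"
      using N by (simp add: s_def divide_simps)
    ultimately show ?thesis
      using assms(2) word_path_Cons[OF assms(1)] 3 by (simp add: joinpaths_def N_def)
  qed
qed

lemma homotopic_join_word_path_Cons:
  assumes w: "w \<noteq> []" "path (word_path w)" "path_image (word_path w) \<subseteq> P7"
    and l: "fst l < 7" "pathfinish (letter_path l) = pathstart (word_path w)"
  shows "homotopic_paths P7 (letter_path l +++ word_path w) (word_path (l # w))"
proof (rule homotopic_paths_reparametrize[where f = "cons_reparam (length w)"])
  have N: "length w \<ge> 1"
    using w(1) by (simp add: Suc_le_eq)
  show "path (letter_path l +++ word_path w)"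
    using w(2) l(2) by (rule path_join_imp[OF path_letter_path])
  show "path_image (letter_path l +++ word_path w) \<subseteq> P7"
    using w(3) l path_image_letter_path[of l] by (simp add: path_image_join)
  show "continuous_on {0..1} (cons_reparam (length w))"
    unfolding cons_reparam_def using N
    by (intro continuous_on_cases_le) (auto intro!: continuous_intros)
  show "cons_reparam (length w) \<in> {0..1} \<rightarrow> {0..1}"
    using cons_reparam_in_01[OF N] by (rule Pi_I)
  show "cons_reparam (length w) 0 = 0" "cons_reparam (length w) 1 = 1"
    using w(1) by (simp_all add: cons_reparam_def)
  show "word_path (l # w) t = (letter_path l +++ word_path w) (cons_reparam (length w) t)"
    if "t \<in> {0..1}" for t
    using w(1) that l(2) by (rule word_path_Cons_eq_join)
qed

lemma path_word_path:
  assumes "edge_word b w" "w \<noteq> []"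
  shows "path (word_path w) \<and> path_image (word_path w) \<subseteq> P7 \<and> pathstart (word_path w) = vertex b \<and>
    pathfinish (word_path w) = vertex (if even (length w) then b else \<not> b)"
  using assms
proof (induction w arbitrary: b)
  case (Cons l w)
  have l: "snd l = b" "fst l < 7" "edge_word (\<not> b) w"
    using Cons.prems(1) by simp_all
  show ?case
  proof (cases "w = []")
    case True
    have "word_path [l] = letter_path l"
      by (rule ext) (simp add: word_path_singleton)
    then show ?thesis
      using l path_image_letter_path[of l] True by simp
  next
    case False
    have IH: "path (word_path w) \<and> path_image (word_path w) \<subseteq> P7 \<and>
        pathstart (word_path w) = vertex (\<not> b) \<and>
        pathfinish (word_path w) = vertex (if even (length w) then \<not> b else b)"
      using Cons.IH[OF l(3) False] by simp
    then have "homotopic_paths P7 (letter_path l +++ word_path w) (word_path (l # w))"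
      using l False by (intro homotopic_join_word_path_Cons) auto
    then have "path (word_path (l # w)) \<and> path_image (word_path (l # w)) \<subseteq> P7 \<and>
        pathstart (word_path (l # w)) = pathstart (letter_path l) \<and>
        pathfinish (word_path (l # w)) = pathfinish (word_path w)"
      by (metis homotopic_paths_imp_path homotopic_paths_imp_subset
          homotopic_paths_imp_pathstart homotopic_paths_imp_pathfinish pathstart_join pathfinish_join)
    with IH l show ?thesis
      by simp
  qed
qed simp

lemma path01_word_path: "edge_word True w \<Longrightarrow> odd (length w) \<Longrightarrow> path01 (word_path w)"
  using path_word_path[of True w] by (cases w) (auto simp: path01_def)

lemma homotopic_word_path_Cons:
  assumes "edge_word b (l # w)" "w \<noteq> []"
  shows "homotopic_paths P7 (word_path (l # w)) (letter_path l +++ word_path w)"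
  using assms path_word_path[of "\<not> b" w]
  by (intro homotopic_paths_sym[OF homotopic_join_word_path_Cons]) auto

lemma homotopic_word_path_Cons_Cons:
  assumes xyw: "edge_word b (x # y # w)" and "w \<noteq> []"
  shows "homotopic_paths P7 (word_path (x # y # w)) (letter_path x +++ (letter_path y +++ word_path w))"
proof -
  have yw: "edge_word (\<not> b) (y # w)"
    using xyw by simp
  have "homotopic_paths P7 (word_path (x # y # w)) (letter_path x +++ word_path (y # w))"
    using xyw by (rule homotopic_word_path_Cons) simp
  also have "homotopic_paths P7 \<dots> (letter_path x +++ (letter_path y +++ word_path w))"
  proof (rule homotopic_paths_join)
    show "homotopic_paths P7 (letter_path x) (letter_path x)"
      using xyw path_image_letter_path[of x] by simp
    show "homotopic_paths P7 (word_path (y # w)) (letter_path y +++ word_path w)"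
      using yw \<open>w \<noteq> []\<close> by (rule homotopic_word_path_Cons)
    show "pathfinish (letter_path x) = pathstart (word_path (y # w))"
      using xyw path_word_path[OF yw] by simp
  qed
  finally show ?thesis .
qed

definition graph_map_words :: "(nat \<Rightarrow> letter list) \<Rightarrow> bool" where
  "graph_map_words W \<longleftrightarrow> (\<forall>i<7. edge_word True (W i) \<and> odd (length (W i)))"

lemma path01_graph_map_word: "graph_map_words W \<Longrightarrow> i < 7 \<Longrightarrow> path01 (word_path (W i))"
  by (simp add: graph_map_words_def path01_word_path)

text \<open>The two vertices lie on every edge; \<open>edge_index\<close> assigns them to edge \<open>a\<close>.\<close>

definition edge_index :: "real \<times> real \<Rightarrow> nat" where
  "edge_index p =
    (if 0 < fst p \<and> fst p < 1 then THE i. i < 7 \<and> snd p = real i * fst p * (1 - fst p) else 0)"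

lemma edge_index_arc:
  assumes "i < 7" "0 < t" "t < 1"
  shows "edge_index (arc i t) = i"
proof -
  have "(THE j. j < 7 \<and> arc i t = arc j t) = i"
    using assms arc_eq_arc_imp_eq by (intro the_equality) auto
  then show ?thesis
    using assms(2,3) by (simp add: edge_index_def arc_def)
qed

lemma graph_map_v0 [simp]: "graph_map W (0, 0) = (0, 0)"
  and graph_map_v1 [simp]: "graph_map W (1, 0) = (1, 0)"
  by (simp_all add: graph_map_def)

lemma graph_map_arc:
  assumes W: "graph_map_words W" and i: "i < 7" and t: "t \<in> {0..1}"
  shows "graph_map W (arc i t) = word_path (W i) t"
proof -
  have W_i: "path01 (word_path (W i))"
    using W i by (rule path01_graph_map_word)
  consider "t = 0" | "t = 1" | "0 < t \<and> t < 1"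
    using t by fastforce
  then show ?thesis
  proof cases
    case 1
    then show ?thesis
      using W_i by (simp add: path01_def pathstart_def)
  next
    case 2
    then show ?thesis
      using W_i by (simp add: path01_def pathfinish_def)
  next
    case 3
    then have "graph_map W (arc i t) = word_path (W (edge_index (arc i t))) t"
      by (simp add: graph_map_def edge_index_def arc_def)
    then show ?thesis
      using 3 i by (simp add: edge_index_arc)
  qed
qed

lemma graph_map_edge:
  "graph_map_words W \<Longrightarrow> i < 7 \<Longrightarrow> p \<in> edge i \<Longrightarrow> graph_map W p = word_path (W i) (fst p)"
  using graph_map_arc edgeD by metis

lemma continuous_on_graph_map:
  assumes W: "graph_map_words W"
  shows "continuous_on P7 (graph_map W)"
  unfolding P7_eq_Union_edge
proof (rule continuous_on_closed_Union)
  fix i assume i: "i \<in> {..<7::nat}"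
  have "continuous_on {0..1} (word_path (W i))"
    using path01_graph_map_word[OF W] i by (simp add: path01_def path_def)
  moreover have "fst ` edge i \<subseteq> {0..1}"
    by (auto dest: edgeD)
  ultimately have "continuous_on (edge i) (word_path (W i) \<circ> fst)"
    by (intro continuous_on_compose continuous_on_fst continuous_on_id) (rule continuous_on_subset)
  then show "continuous_on (edge i) (graph_map W)"
    by (rule continuous_on_eq) (use graph_map_edge[OF W] i in auto)
qed (simp_all add: closed_edge)

lemma graph_map_funcset:
  assumes W: "graph_map_words W"
  shows "graph_map W \<in> P7 \<rightarrow> P7"
proof
  fix p assume "p \<in> P7"
  then obtain i where i: "i < 7" "p \<in> edge i"
    by (auto simp: P7_eq_Union_edge)
  then have "graph_map W p = word_path (W i) (fst p)" "fst p \<in> {0..1}"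
    using graph_map_edge[OF W] edgeD by blast+
  then have "graph_map W p \<in> path_image (word_path (W i))"
    by (simp add: path_image_def)
  then show "graph_map W p \<in> P7"
    using path01_graph_map_word[OF W i(1)] by (auto simp: path01_def)
qed

lemma continuous_map_graph_map: "graph_map_words W \<Longrightarrow> continuous_map P7_top P7_top (graph_map W)"
  by (simp add: P7_top_def continuous_on_graph_map graph_map_funcset)

lemma homotopic_graph_map_arc:
  assumes "graph_map_words W" "i < 7"
  shows "homotopic_paths P7 (graph_map W \<circ> arc i) (word_path (W i))"
proof -
  have "homotopic_paths P7 (word_path (W i)) (graph_map W \<circ> arc i)"
    using path01_graph_map_word[OF assms] graph_map_arc[OF assms]
    by (intro homotopic_paths_eq) (auto simp: path01_def)
  then show ?thesis
    by (rule homotopic_paths_sym)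
qed

section \<open>Pasting homotopies along the edges\<close>

definition edgewise :: "(nat \<Rightarrow> real \<times> real \<Rightarrow> 'a) \<Rightarrow> real \<times> (real \<times> real) \<Rightarrow> 'a" where
  "edgewise H z = H (edge_index (snd z)) (fst z, fst (snd z))"

lemma edgewise_edge:
  assumes "i < 7" "p \<in> edge i" "s \<in> {0..1}"
    and vertices: "\<And>j s. j < 7 \<Longrightarrow> s \<in> {0..1} \<Longrightarrow> H j (s, 0) = H 0 (s, 0) \<and> H j (s, 1) = H 0 (s, 1)"
  shows "edgewise H (s, p) = H i (s, fst p)"
proof -
  have p: "p = arc i (fst p)" "fst p \<in> {0..1}"
    using edgeD[OF assms(2)] by auto
  consider "fst p = 0" | "fst p = 1" | "0 < fst p \<and> fst p < 1"
    using p(2) by fastforce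
  then show ?thesis
  proof cases
    case 3
    then have "edge_index p = i"
      using edge_index_arc[OF assms(1)] p(1) by metis
    then show ?thesis
      by (simp add: edgewise_def)
  qed (use vertices[OF assms(1,3)] in \<open>simp_all add: edgewise_def edge_index_def\<close>)
qed

lemma continuous_on_edgewise:
  assumes cont: "\<And>i. i < 7 \<Longrightarrow> continuous_on ({0..1} \<times> {0..1}) (H i)"
    and vertices: "\<And>j s. j < 7 \<Longrightarrow> s \<in> {0..1} \<Longrightarrow> H j (s, 0) = H 0 (s, 0) \<and> H j (s, 1) = H 0 (s, 1)"
  shows "continuous_on ({0..1} \<times> P7) (edgewise H)"
proof -
  have "{0..1} \<times> P7 = (\<Union>i<7. {0..1::real} \<times> edge i)"
    by (auto simp: P7_eq_Union_edge)
  moreover have "continuous_on ({0..1} \<times> edge i) (edgewise H)" if i: "i < 7" for i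
  proof -
    have "(\<lambda>z. (fst z, fst (snd z))) ` ({0..1} \<times> edge i) \<subseteq> {0..1} \<times> {0..1}"
      by (auto dest: edgeD)
    then have "continuous_on ({0..1} \<times> edge i) (H i \<circ> (\<lambda>z. (fst z, fst (snd z))))"
      by (intro continuous_on_compose continuous_intros continuous_on_subset[OF cont[OF i]])
    then show ?thesis
      by (rule continuous_on_eq) (use edgewise_edge[where H = H, OF i _ _ vertices] in auto)
  qed
  ultimately show ?thesis
    by (auto intro!: continuous_on_closed_Union closed_Times closed_edge)
qed

lemma homotopic_with_P7_edgewise:
  fixes H :: "nat \<Rightarrow> real \<times> real \<Rightarrow> real \<times> real"
  assumes cont: "\<And>i. i < 7 \<Longrightarrow> continuous_on ({0..1} \<times> {0..1}) (H i)"
    and image: "\<And>i. i < 7 \<Longrightarrow> H i \<in> ({0..1} \<times> {0..1}) \<rightarrow> P7"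
    and ends: "\<And>i t. i < 7 \<Longrightarrow> t \<in> {0..1} \<Longrightarrow> H i (0, t) = f (arc i t) \<and> H i (1, t) = g (arc i t)"
    and vertices: "\<And>j s. j < 7 \<Longrightarrow> s \<in> {0..1} \<Longrightarrow> H j (s, 0) = H 0 (s, 0) \<and> H j (s, 1) = H 0 (s, 1)"
  shows "homotopic_with (\<lambda>x. True) P7_top P7_top f g"
proof -
  have on_edge: "\<exists>i<7. fst p \<in> {0..1} \<and> edgewise H (s, p) = H i (s, fst p) \<and>
      f (arc i (fst p)) = f p \<and> g (arc i (fst p)) = g p"
    if p: "p \<in> P7" and s: "s \<in> {0..1}" for s p
  proof -
    obtain i where i: "i < 7" "p \<in> edge i"
      using p by (auto simp: P7_eq_Union_edge)
    moreover have "arc i (fst p) = p" "fst p \<in> {0..1}"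
      using edgeD[OF i(2)] by simp_all
    ultimately show ?thesis
      using edgewise_edge[where H = H, OF i s vertices] by (intro exI[of _ i]) simp
  qed
  have "continuous_on ({0..1} \<times> P7) (edgewise H)"
    using continuous_on_edgewise[where H = H, OF cont vertices] by blast
  moreover have "edgewise H \<in> ({0..1} \<times> P7) \<rightarrow> P7"
  proof
    fix z assume "z \<in> {0..1::real} \<times> P7"
    then obtain s p where z: "z = (s, p)" "s \<in> {0..1}" "p \<in> P7"
      by blast
    with on_edge obtain i where "i < 7" "fst p \<in> {0..1}" "edgewise H z = H i (s, fst p)"
      by blast
    with image z(2) show "edgewise H z \<in> P7"
      by (auto simp: Pi_iff)
  qed
  moreover have "edgewise H (0, p) = f p \<and> edgewise H (1, p) = g p" if p: "p \<in> P7" for p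
  proof -
    obtain i where "i < 7" "fst p \<in> {0..1}" "edgewise H (0, p) = H i (0, fst p)"
      "f (arc i (fst p)) = f p"
      using on_edge[OF p, of 0] by auto
    moreover obtain j where "j < 7" "edgewise H (1, p) = H j (1, fst p)" "g (arc j (fst p)) = g p"
      using on_edge[OF p, of 1] by auto
    ultimately show ?thesis
      using ends by simp
  qed
  ultimately show ?thesis
    unfolding P7_top_def by (subst homotopic_with) (auto intro!: exI[where x = "edgewise H"])
qed

lemma homotopic_with_P7_if_homotopic_on_edges:
  assumes "\<And>i. i < 7 \<Longrightarrow> homotopic_paths P7 (f \<circ> arc i) (g \<circ> arc i)"
  shows "homotopic_with (\<lambda>x. True) P7_top P7_top f g"
proof -
  define homotopy where "homotopy i h \<longleftrightarrow>
      continuous_on ({0..1::real} \<times> {0..1::real}) h \<and> h \<in> ({0..1} \<times> {0..1}) \<rightarrow> P7 \<and>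
      (\<forall>t\<in>{0..1}. h (0, t) = f (arc i t) \<and> h (1, t) = g (arc i t)) \<and>
      (\<forall>s\<in>{0..1::real}. h (s, 0) = f (0, 0) \<and> h (s, 1) = f (1, 0))" for i h
  have "\<exists>h. homotopy i h" if i: "i < 7" for i
  proof -
    obtain h where "continuous_on ({0..1::real} \<times> {0..1::real}) h" "h \<in> ({0..1} \<times> {0..1}) \<rightarrow> P7"
      "\<forall>t\<in>{0..1}. h (0, t) = (f \<circ> arc i) t" "\<forall>t\<in>{0..1}. h (1, t) = (g \<circ> arc i) t"
      "\<forall>s\<in>{0..1}. pathstart (h \<circ> Pair s) = pathstart (f \<circ> arc i) \<and>
         pathfinish (h \<circ> Pair s) = pathfinish (f \<circ> arc i)"
      using assms[OF i] unfolding homotopic_paths by blast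
    then show ?thesis
      unfolding homotopy_def by (intro exI[of _ h]) (simp add: pathstart_def pathfinish_def)
  qed
  then obtain H where H: "\<And>i. i < 7 \<Longrightarrow> homotopy i (H i)"
    by metis
  show ?thesis
    by (rule homotopic_with_P7_edgewise[of H]) (use H in \<open>simp_all add: homotopy_def\<close>)
qed

section \<open>The fundamental group of \<open>P\<^sub>7\<close> at \<open>v\<^sub>0\<close>\<close>

definition loop_homotopic :: "(real \<Rightarrow> real \<times> real) \<Rightarrow> (real \<Rightarrow> real \<times> real) \<Rightarrow> bool" where
  "loop_homotopic p q \<longleftrightarrow> loop0 p \<and> loop0 q \<and> homotopic_paths P7 p q"

lemma loop_homotopic_refl_iff: "loop_homotopic p p \<longleftrightarrow> loop0 p"
  by (auto simp: loop_homotopic_def loop0_def)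

lemma loop0_linepath: "loop0 (linepath (0, 0) (0, 0))"
  using edge_subset_P7[of 0] arc_0[of 0] by (force simp: loop0_def edge_def)

lemma part_equivp_loop_homotopic: "part_equivp loop_homotopic"
proof (rule part_equivpI)
  show "\<exists>p. loop_homotopic p p"
    using loop0_linepath loop_homotopic_refl_iff by blast
  show "symp loop_homotopic"
    by (auto simp: symp_def loop_homotopic_def intro: homotopic_paths_sym)
  show "transp loop_homotopic"
    by (auto simp: transp_def loop_homotopic_def intro: homotopic_paths_trans)
qed

quotient_type pi1 = "real \<Rightarrow> real \<times> real" / partial: loop_homotopic
  by (rule part_equivp_loop_homotopic)

instantiation pi1 :: group_add
begin

lift_definition zero_pi1 :: pi1 is "linepath (0, 0) (0, 0)"
  by (simp add: loop_homotopic_refl_iff loop0_linepath)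

lift_definition plus_pi1 :: "pi1 \<Rightarrow> pi1 \<Rightarrow> pi1" is "(+++)"
  by (auto simp: loop_homotopic_def loop0_def path_image_join intro: homotopic_paths_join)

lift_definition uminus_pi1 :: "pi1 \<Rightarrow> pi1" is reversepath
  by (auto simp: loop_homotopic_def loop0_def homotopic_paths_reversepath)

definition minus_pi1 :: "pi1 \<Rightarrow> pi1 \<Rightarrow> pi1" where
  "minus_pi1 a b = a + - b"

instance
proof
  fix a b c :: pi1
  show "a + b + c = a + (b + c)"
    by transfer (auto simp: loop_homotopic_def loop0_def path_image_join
        intro!: homotopic_paths_sym[OF homotopic_paths_assoc])
  show "0 + a = a"
    by transfer (auto simp: loop_homotopic_def loop0_def path_image_join intro!: homotopic_paths_lid')
  show "a + 0 = a"
    by transfer (auto simp: loop_homotopic_def loop0_def path_image_join intro!: homotopic_paths_rid')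
  show "- a + a = 0"
    by transfer (auto simp: loop_homotopic_def loop0_def path_image_join
        intro!: homotopic_paths_linv[THEN homotopic_paths_trans])
  show "a + - b = a - b"
    by (simp add: minus_pi1_def)
qed

end

abbreviation loop_class :: "(real \<Rightarrow> real \<times> real) \<Rightarrow> pi1" where
  "loop_class \<equiv> abs_pi1"

lemma loop_class_eq_iff: "loop0 p \<Longrightarrow> loop0 q \<Longrightarrow> loop_class p = loop_class q \<longleftrightarrow> homotopic_paths P7 p q"
  by (metis Quotient3_rel[OF Quotient3_pi1] loop_homotopic_def loop_homotopic_refl_iff)

lemma loop_class_cong: "loop0 p \<Longrightarrow> homotopic_paths P7 p q \<Longrightarrow> loop_class p = loop_class q"
  using loop_class_eq_iff loop0_homotopic by blast

lemma loop_class_join: "loop0 p \<Longrightarrow> loop0 q \<Longrightarrow> loop_class (p +++ q) = loop_class p + loop_class q"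
  by (simp add: plus_pi1.abs_eq loop_homotopic_refl_iff)

lemma loop_class_reversepath: "loop0 p \<Longrightarrow> loop_class (reversepath p) = - loop_class p"
  by (simp add: uminus_pi1.abs_eq loop_homotopic_refl_iff)

definition based_map :: "(real \<times> real \<Rightarrow> real \<times> real) \<Rightarrow> bool" where
  "based_map f \<longleftrightarrow> continuous_on P7 f \<and> f \<in> P7 \<rightarrow> P7 \<and> f (0, 0) = (0, 0)"

lemma based_map_graph_map: "graph_map_words W \<Longrightarrow> based_map (graph_map W)"
  by (simp add: based_map_def continuous_on_graph_map graph_map_funcset)

lemma based_map_comp:
  assumes "based_map f" "based_map g"
  shows "based_map (f \<circ> g)"
proof -
  have "g ` P7 \<subseteq> P7"
    using assms(2) by (auto simp: based_map_def)
  then have "continuous_on P7 (f \<circ> g)"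
    using assms unfolding based_map_def by (metis continuous_on_compose continuous_on_subset)
  with assms show ?thesis
    by (auto simp: based_map_def)
qed

lemma loop0_compose: "based_map f \<Longrightarrow> loop0 p \<Longrightarrow> loop0 (f \<circ> p)"
  unfolding based_map_def loop0_def
  by (auto simp: path_image_compose pathstart_compose pathfinish_compose
      intro: path_continuous_image continuous_on_subset)

lemma path01_compose: "based_map f \<Longrightarrow> f (1, 0) = (1, 0) \<Longrightarrow> path01 p \<Longrightarrow> path01 (f \<circ> p)"
  unfolding based_map_def path01_def
  by (auto simp: path_image_compose pathstart_compose pathfinish_compose
      intro: path_continuous_image continuous_on_subset)

text \<open>Maps that are not based self-maps of \<open>P\<^sub>7\<close> get the identity as a junk value.\<close>

lift_definition pi1_map :: "(real \<times> real \<Rightarrow> real \<times> real) \<Rightarrow> pi1 \<Rightarrow> pi1" is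
  "\<lambda>f p. if based_map f then f \<circ> p else p"
  using loop0_compose
  by (auto simp: loop_homotopic_def based_map_def intro: homotopic_paths_continuous_image)

lemma pi1_map_loop_class: "based_map f \<Longrightarrow> loop0 p \<Longrightarrow> pi1_map f (loop_class p) = loop_class (f \<circ> p)"
  by (simp add: pi1_map.abs_eq loop_homotopic_refl_iff)

lemma pi1_map_add:
  assumes "based_map f"
  shows "pi1_map f (x + y) = pi1_map f x + pi1_map f y"
proof (induction x rule: pi1.abs_induct)
  case (1 p)
  show ?case
  proof (induction y rule: pi1.abs_induct)
    case (1 q)
    with \<open>loop_homotopic p p\<close> have "loop0 p" "loop0 q"
      by (simp_all add: loop_homotopic_refl_iff)
    with assms show ?case
      by (simp add: loop_class_join[symmetric] pi1_map_loop_class loop0_join_loop0 loop0_compose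
          path_compose_join)
  qed
qed

abbreviation rev_a :: "real \<Rightarrow> real \<times> real" where
  "rev_a \<equiv> reversepath (arc 0)"

definition class01 :: "(real \<Rightarrow> real \<times> real) \<Rightarrow> pi1" where
  "class01 p = loop_class (p +++ rev_a)"

definition class10 :: "(real \<Rightarrow> real \<times> real) \<Rightarrow> pi1" where
  "class10 q = loop_class (arc 0 +++ q)"

definition edge_gen :: "nat \<Rightarrow> pi1" where
  "edge_gen i = class01 (arc i)"

lemma path01_arc_0: "path01 (arc 0)"
  by (simp add: path01_arc)

lemma path10_rev_a: "path10 rev_a"
  by (simp add: path10_reversepath path01_arc_0)

lemma loop0_join_rev_a: "path01 p \<Longrightarrow> loop0 (p +++ rev_a)"
  by (simp add: loop0_join path10_rev_a)

lemma loop0_arc_0_join: "path10 q \<Longrightarrow> loop0 (arc 0 +++ q)"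
  by (simp add: loop0_join path01_arc_0)

lemma class01_cong: "path01 p \<Longrightarrow> homotopic_paths P7 p q \<Longrightarrow> class01 p = class01 q"
  unfolding class01_def using path10_rev_a
  by (intro loop_class_cong loop0_join_rev_a homotopic_paths_join) (auto simp: path01_def path10_def)

lemma edge_gen_0: "edge_gen 0 = 0"
proof -
  have "homotopic_paths P7 (arc 0 +++ rev_a) (linepath (0, 0) (0, 0))"
    using homotopic_paths_rinv[of "arc 0" P7] path01_arc_0 by (simp add: path01_def)
  then show ?thesis
    unfolding edge_gen_def class01_def zero_pi1_def
    by (simp add: loop_class_cong loop0_join_rev_a path01_arc_0)
qed

lemma class10_reversepath: "path01 r \<Longrightarrow> class10 (reversepath r) = - class01 r"
  unfolding class01_def class10_def
  by (simp add: loop_class_reversepath[symmetric] loop0_join_rev_a reversepath_joinpaths path01_def)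

lemma homotopic_paths_cancel_a:
  assumes p: "path01 p" and q: "path10 q"
  shows "homotopic_paths P7 ((p +++ rev_a) +++ (arc 0 +++ q)) (p +++ q)"
proof -
  note defs = path01_def path10_def
  have "homotopic_paths P7 ((p +++ rev_a) +++ (arc 0 +++ q)) (p +++ (rev_a +++ (arc 0 +++ q)))"
    using p q path01_arc_0 path10_rev_a
    by (intro homotopic_paths_sym[OF homotopic_paths_assoc]) (auto simp: defs path_image_join)
  also have "homotopic_paths P7 \<dots> (p +++ ((rev_a +++ arc 0) +++ q))"
    using p q path01_arc_0 path10_rev_a
    by (intro homotopic_paths_join homotopic_paths_assoc) (auto simp: defs path_image_join)
  also have "homotopic_paths P7 \<dots> (p +++ (linepath (1, 0) (1, 0) +++ q))"
    using p q path01_arc_0 homotopic_paths_linv[of "arc 0" P7]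
    by (intro homotopic_paths_join) (auto simp: defs path_image_join)
  also have "homotopic_paths P7 \<dots> (p +++ q)"
    using p q by (intro homotopic_paths_join homotopic_paths_lid') (auto simp: defs)
  finally show ?thesis .
qed

lemma loop_class_join_class01_class10:
  assumes "path01 p" "path10 q"
  shows "loop_class (p +++ q) = class01 p + class10 q"
proof -
  have "class01 p + class10 q = loop_class ((p +++ rev_a) +++ (arc 0 +++ q))"
    using assms by (simp add: class01_def class10_def loop_class_join loop0_join_rev_a loop0_arc_0_join)
  also have "\<dots> = loop_class (p +++ q)"
    using assms by (intro loop_class_cong loop0_join_loop0 loop0_join_rev_a loop0_arc_0_join
        homotopic_paths_cancel_a)
  finally show ?thesis
    by simp
qed

lemma class01_join3:
  assumes p: "path01 p" and q: "path10 q" and r: "path01 r"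
  shows "class01 (p +++ (q +++ r)) = class01 p + class10 q + class01 r"
proof -
  note defs = path01_def path10_def
  have pq: "loop0 (p +++ q)"
    using p q by (rule loop0_join)
  have "class01 p + class10 q + class01 r = loop_class (p +++ q) + loop_class (r +++ rev_a)"
    using loop_class_join_class01_class10[OF p q] by (simp add: class01_def)
  also have "\<dots> = loop_class ((p +++ q) +++ (r +++ rev_a))"
    using pq r by (simp add: loop_class_join loop0_join_rev_a)
  also have "\<dots> = loop_class (((p +++ q) +++ r) +++ rev_a)"
    using p q r path10_rev_a
    by (intro loop_class_cong[OF loop0_join_loop0[OF pq loop0_join_rev_a[OF r]]] homotopic_paths_assoc)
      (auto simp: defs path_image_join)
  also have "\<dots> = loop_class ((p +++ (q +++ r)) +++ rev_a)"
  proof (rule loop_class_cong)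
    show "loop0 (((p +++ q) +++ r) +++ rev_a)"
      using p q r by (intro loop0_join_rev_a) (auto simp: defs path_image_join)
    show "homotopic_paths P7 (((p +++ q) +++ r) +++ rev_a) ((p +++ (q +++ r)) +++ rev_a)"
      using p q r path10_rev_a
      by (intro homotopic_paths_join homotopic_paths_sym[OF homotopic_paths_assoc])
        (auto simp: defs path_image_join)
  qed
  finally show ?thesis
    by (simp add: class01_def)
qed

lemma homotopic_paths_if_class01_eq:
  assumes p: "path01 p" and q: "path01 q" and eq: "class01 p = class01 q"
  shows "homotopic_paths P7 p q"
proof -
  have cancel: "homotopic_paths P7 ((r +++ rev_a) +++ arc 0) r" if r: "path01 r" for r
  proof -
    have "homotopic_paths P7 ((r +++ rev_a) +++ arc 0) (r +++ (rev_a +++ arc 0))"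
      using r path01_arc_0 path10_rev_a
      by (intro homotopic_paths_sym[OF homotopic_paths_assoc]) (auto simp: path01_def path10_def)
    also have "homotopic_paths P7 \<dots> (r +++ linepath (1, 0) (1, 0))"
      using r path01_arc_0 homotopic_paths_linv[of "arc 0" P7]
      by (intro homotopic_paths_join) (auto simp: path01_def)
    also have "homotopic_paths P7 \<dots> r"
      using r by (intro homotopic_paths_rid') (auto simp: path01_def)
    finally show ?thesis .
  qed
  have "homotopic_paths P7 (p +++ rev_a) (q +++ rev_a)"
    using eq loop_class_eq_iff loop0_join_rev_a p q by (simp add: class01_def)
  then have "homotopic_paths P7 ((p +++ rev_a) +++ arc 0) ((q +++ rev_a) +++ arc 0)"
    by (rule homotopic_paths_join) (use path01_arc_0 in \<open>auto simp: path01_def\<close>)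
  then show ?thesis
    using cancel[OF p] cancel[OF q] homotopic_paths_trans homotopic_paths_sym by metis
qed

lemma pi1_map_class01:
  assumes f: "based_map f" "f (1, 0) = (1, 0)" and p: "path01 p"
  shows "pi1_map f (class01 p) = class01 (f \<circ> p) - class01 (f \<circ> arc 0)"
proof -
  have "pi1_map f (class01 p) = loop_class ((f \<circ> p) +++ reversepath (f \<circ> arc 0))"
    using f p by (simp add: class01_def pi1_map_loop_class loop0_join_rev_a path_compose_join
        path_compose_reversepath)
  also have "\<dots> = class01 (f \<circ> p) + class10 (reversepath (f \<circ> arc 0))"
    using f p path01_arc_0
    by (intro loop_class_join_class01_class10 path10_reversepath path01_compose)
  also have "\<dots> = class01 (f \<circ> p) - class01 (f \<circ> arc 0)"
    using f path01_arc_0 by (simp add: class10_reversepath path01_compose)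
  finally show ?thesis .
qed

section \<open>Words as group elements\<close>

fun letter_val :: "(nat \<Rightarrow> 'a::group_add) \<Rightarrow> letter \<Rightarrow> 'a" where
  "letter_val e (i, b) = (if b then e i else - e i)"

definition word_val :: "(nat \<Rightarrow> 'a::group_add) \<Rightarrow> letter list \<Rightarrow> 'a" where
  "word_val e w = sum_list (map (letter_val e) w)"

lemma word_val_Nil [simp]: "word_val e [] = 0"
  and word_val_Cons [simp]: "word_val e (l # w) = letter_val e l + word_val e w"
  and word_val_append [simp]: "word_val e (u @ w) = word_val e u + word_val e w"
  by (simp_all add: word_val_def)

lemma hom_word_val:
  fixes h :: "'a::group_add \<Rightarrow> 'b::group_add"
  assumes h_add: "\<And>u v. h (u + v) = h u + h v"
  shows "h (word_val e w) = word_val (h \<circ> e) w"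
proof -
  have h_0: "h 0 = 0"
    using h_add[of 0 0] by (metis add.right_neutral add_left_cancel)
  have h_minus: "h (- u) = - h u" for u
    using h_add[of "- u" u] h_0 by (simp add: eq_neg_iff_add_eq_0)
  show ?thesis
    by (induction w) (auto simp: h_0 h_add h_minus)
qed

lemma class01_word_path:
  assumes "edge_word True w" "odd (length w)"
  shows "class01 (word_path w) = word_val edge_gen w"
  using assms
proof (induction w rule: induct_list012)
  case (2 x)
  then obtain i where "x = lo i"
    by (cases x) auto
  moreover have "word_path [x] = letter_path x"
    by (rule ext) (simp add: word_path_singleton)
  ultimately show ?case
    by (simp add: edge_gen_def)
next
  case (3 x y zs)
  obtain i j where x: "x = lo i" "i < 7" and y: "y = up j" "j < 7"
    and zs: "edge_word True zs" "odd (length zs)"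
    using "3.prems" by (cases x; cases y) auto
  have "zs \<noteq> []"
    using zs(2) by auto
  then have "homotopic_paths P7 (word_path (x # y # zs))
      (arc i +++ (reversepath (arc j) +++ word_path zs))"
    using homotopic_word_path_Cons_Cons[OF "3.prems"(1)] x(1) y(1) by simp
  then have "class01 (word_path (x # y # zs)) =
      class01 (arc i +++ (reversepath (arc j) +++ word_path zs))"
    by (rule class01_cong[OF path01_word_path[OF "3.prems"]])
  also have "\<dots> = class01 (arc i) + class10 (reversepath (arc j)) + class01 (word_path zs)"
    using path01_arc[OF x(2)] path10_reversepath[OF path01_arc[OF y(2)]] path01_word_path[OF zs]
    by (rule class01_join3)
  also have "\<dots> = word_val edge_gen (x # y # zs)"
    using x y zs "3.IH"(1)
    by (simp add: class10_reversepath path01_arc edge_gen_def[symmetric] add.assoc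
        del: add_uminus_conv_diff)
  finally show ?case .
qed simp

lemma class01_graph_map_arc:
  assumes "graph_map_words U" "i < 7"
  shows "class01 (graph_map U \<circ> arc i) = word_val edge_gen (U i)"
proof -
  have "path01 (graph_map U \<circ> arc i)"
    using assms by (intro path01_compose based_map_graph_map path01_arc) auto
  then have "class01 (graph_map U \<circ> arc i) = class01 (word_path (U i))"
    using homotopic_graph_map_arc[OF assms] by (rule class01_cong)
  also have "\<dots> = word_val edge_gen (U i)"
    using assms by (simp add: graph_map_words_def class01_word_path)
  finally show ?thesis .
qed

lemma pi1_map_edge_gen:
  assumes "graph_map_words U" "i < 7"
  shows "pi1_map (graph_map U) (edge_gen i) = word_val edge_gen (U i) - word_val edge_gen (U 0)"
  using assms
  by (simp add: edge_gen_def pi1_map_class01 based_map_graph_map path01_arc class01_graph_map_arc)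

lemma graph_map_comp_homotopic_id:
  assumes U: "graph_map_words U" and W: "graph_map_words W"
    and inverse: "\<And>i. i < 7 \<Longrightarrow>
      pi1_map (graph_map U) (word_val edge_gen (W i)) + word_val edge_gen (U 0) = edge_gen i"
  shows "homotopic_with (\<lambda>x. True) P7_top P7_top (graph_map U \<circ> graph_map W) id"
proof (rule homotopic_with_P7_if_homotopic_on_edges)
  fix i :: nat assume i: "i < 7"
  let ?f = "graph_map U"
  have f: "based_map ?f" "?f (1, 0) = (1, 0)"
    using U by (simp_all add: based_map_graph_map)
  have Wi: "path01 (word_path (W i))"
    using W i by (rule path01_graph_map_word)
  have hom: "homotopic_paths P7 (?f \<circ> (graph_map W \<circ> arc i)) (?f \<circ> word_path (W i))"
    using homotopic_graph_map_arc[OF W i]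
    by (rule homotopic_paths_continuous_image) (use f(1) in \<open>simp_all add: based_map_def\<close>)
  have fg: "path01 ((?f \<circ> graph_map W) \<circ> arc i)"
    using U W i by (intro path01_compose based_map_comp based_map_graph_map path01_arc) auto
  then have "class01 ((?f \<circ> graph_map W) \<circ> arc i) = class01 (?f \<circ> word_path (W i))"
    using hom by (simp add: class01_cong o_assoc)
  also have "\<dots> = pi1_map ?f (class01 (word_path (W i))) + class01 (?f \<circ> arc 0)"
    using pi1_map_class01[OF f Wi] by simp
  also have "\<dots> = class01 (id \<circ> arc i)"
    using W i U inverse[OF i]
    by (simp add: graph_map_words_def class01_word_path class01_graph_map_arc edge_gen_def)
  finally show "homotopic_paths P7 ((?f \<circ> graph_map W) \<circ> arc i) (id \<circ> arc i)"
    using fg path01_arc[OF i] by (intro homotopic_paths_if_class01_eq) simp_all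
qed

section \<open>A homotopy inverse of the prototype maps\<close>

primrec nsmul :: "nat \<Rightarrow> 'a::monoid_add \<Rightarrow> 'a" where
  "nsmul 0 x = 0"
| "nsmul (Suc n) x = x + nsmul n x"

lemma nsmul_add: "nsmul (m + n) x = nsmul m x + nsmul n x"
  by (induction m) (simp_all add: add.assoc)

lemma nsmul_double [simp]: "nsmul (2 * m) x = nsmul m x + nsmul m x"
  by (metis mult_2 nsmul_add)

lemma nsmul_commute: "x + y = y + x \<Longrightarrow> x + nsmul m y = nsmul m y + x"
  by (induction m) (simp_all, metis add.assoc)

lemma nsmul_uminus: "- nsmul n (x::'a::group_add) = nsmul n (- x)"
  by (induction n) (simp_all add: minus_add nsmul_commute[of "- x" "- x"])

lemma nsmul_cancel:
  fixes x y :: "'a::group_add"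
  assumes "x + y = 0"
  shows "nsmul m x + nsmul m y = 0"
proof (induction m)
  case (Suc m)
  have "nsmul (Suc m) x + nsmul (Suc m) y = nsmul m x + (x + y) + nsmul m y"
    using nsmul_commute[of x x m] by (simp add: add.assoc)
  then show ?case
    using assms Suc by simp
qed simp

lemma nsmul_cancel_left: "x + y = 0 \<Longrightarrow> nsmul m x + (nsmul m (y::'a::group_add) + z) = z"
  by (simp add: add.assoc[symmetric] nsmul_cancel)

lemma nsmul_commute_left:
  assumes "x + y = y + x"
  shows "x + (nsmul m y + z) = nsmul m y + (x + z)"
  using nsmul_commute[OF assms, of m] by (simp add: add.assoc[symmetric])

lemmas nsmul_commute_self =
  nsmul_commute[of x x] nsmul_commute_left[of x x]
  nsmul_commute[of x "- x"] nsmul_commute_left[of x "- x"]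
  nsmul_commute[of "- x" x] nsmul_commute_left[of "- x" x] for x :: "'a::group_add"

definition word_rep :: "nat \<Rightarrow> 'b list \<Rightarrow> 'b list" where
  "word_rep k u = concat (replicate k u)"

definition word_inv :: "letter list \<Rightarrow> letter list" where
  "word_inv u = rev (map (\<lambda>(i, b). (i, \<not> b)) u)"

lemma word_val_word_rep [simp]: "word_val e (word_rep k u) = nsmul k (word_val e u)"
  by (induction k) (simp_all add: word_rep_def)

lemma word_val_word_inv [simp]: "word_val e (word_inv u) = - word_val e u"
  by (induction u) (auto simp: word_inv_def minus_add)

lemma length_word_rep [simp]: "length (word_rep k u) = k * length u"
  by (induction k) (simp_all add: word_rep_def)

lemma set_word_rep [simp]: "set (word_rep k u) = (if k = 0 then {} else set u)"
  by (induction k) (auto simp: word_rep_def)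

lemma edge_word_word_rep [simp]: "edge_word b u \<Longrightarrow> even (length u) \<Longrightarrow> edge_word b (word_rep k u)"
  by (induction k) (simp_all add: word_rep_def edge_word_append)

text \<open>A word \<open>u\<close> in the generators \<^term>\<open>edge_gen i\<close> (a letter \<^term>\<open>lo i\<close> standing for the
  generator, \<^term>\<open>up i\<close> for its inverse) is realised by the edge path \<^term>\<open>lift_word u\<close>, which
  replaces each generator by the loop \<open>e\<^sub>i A\<close>.\<close>

fun lift_letter :: "letter \<Rightarrow> letter list" where
  "lift_letter (i, True) = [lo i, up 0]"
| "lift_letter (i, False) = [lo 0, up i]"

definition lift_word :: "letter list \<Rightarrow> letter list" where
  "lift_word u = concat (map lift_letter u)"

lemma lift_word_append [simp]: "lift_word (u @ v) = lift_word u @ lift_word v"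
  by (simp add: lift_word_def)

lemma word_val_lift_word [simp]: "e 0 = 0 \<Longrightarrow> word_val e (lift_word u) = word_val e u"
proof (induction u)
  case (Cons l u)
  then show ?case
    by (cases l; cases "snd l") (simp_all add: lift_word_def)
qed (simp add: lift_word_def)

lemma edge_word_lift_word:
  "\<forall>l\<in>set u. fst l < 7 \<Longrightarrow> edge_word True (lift_word u) \<and> even (length (lift_word u))"
proof (induction u)
  case (Cons l u)
  then show ?case
    by (cases l; cases "snd l") (simp_all add: lift_word_def)
qed (simp add: lift_word_def)

text \<open>Write \<open>\<phi> = \<phi>\<^sub>3\<^sub>+\<^sub>2\<^sub>m\<close>, \<open>\<psi> = graph_map (psi_word m)\<close> and \<open>x\<^sub>i = [e\<^sub>i A]\<close>. The word
  \<^term>\<open>psi_gen m i\<close> is the image of \<open>x\<^sub>i\<close> under the inverse of \<open>\<phi>\<^sub>*\<close>, and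
  \<^term>\<open>psi_tail m\<close> \<open>= \<psi>\<^sub>*([\<phi>(a) A])\<^sup>-\<^sup>1\<close> is the class of \<open>\<psi>(a) A\<close>, the choice that makes
  \<open>\<psi> \<circ> \<phi>\<close> send \<open>a\<close> back to \<open>a\<close>.\<close>

definition psi_C :: "letter list" where "psi_C = [lo 4, up 3]"
definition psi_G :: "letter list" where "psi_G = psi_C @ [lo 5]"
definition psi_B :: "letter list" where "psi_B = psi_G @ [up 3]"

definition psi_gen :: "nat \<Rightarrow> nat \<Rightarrow> letter list" where
  "psi_gen m i =
    (if i = 0 then []
     else if i = 1 then psi_B
     else if i = 2 then psi_C
     else if i = 3 then
       word_rep m (psi_B @ word_inv psi_C) @ word_rep (m + 1) psi_B @ psi_G @ [up 1] @ psi_B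
     else if i = 4 then word_rep (2 * m + 1) psi_B @ psi_G @ [up 6] @ psi_B
     else if i = 5 then word_rep (m + 1) psi_C @ word_rep m psi_B @ psi_G @ [up 2] @ psi_C
     else psi_G)"

definition psi_tail :: "nat \<Rightarrow> letter list" where
  "psi_tail m = word_rep m psi_B @ psi_G"

definition psi_word :: "nat \<Rightarrow> nat \<Rightarrow> letter list" where
  "psi_word m i = lift_word (psi_gen m i @ psi_tail m) @ [lo 0]"

lemma graph_map_words_psi_word: "graph_map_words (psi_word m)"
proof -
  have "\<forall>l\<in>set (psi_gen m i @ psi_tail m). fst l < 7" for i
    by (simp add: psi_gen_def psi_tail_def psi_B_def psi_G_def psi_C_def word_inv_def)
  then show ?thesis
    by (simp add: graph_map_words_def psi_word_def edge_word_append edge_word_lift_word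
        del: lift_word_append)
qed

lemma graph_map_words_proto_word: "graph_map_words (proto_word m)"
  unfolding graph_map_words_def
proof (intro allI impI)
  fix i :: nat
  assume "i < 7"
  then have "i = 0 \<or> i = 1 \<or> i = 2 \<or> i = 3 \<or> i = 4 \<or> i = 5 \<or> i = 6"
    by auto
  then show "edge_word True (proto_word m i) \<and> odd (length (proto_word m i))"
    by (elim disjE) (simp_all add: proto_word_def Let_def word_rep_def[symmetric] edge_word_append)
qed

lemmas group_normalize = diff_conv_add_uminus add.assoc minus_add add_minus_cancel minus_add_cancel
  minus_minus nsmul_uminus nsmul_cancel nsmul_cancel_left nsmul_commute_self

text \<open>In the next two proofs \<^const>\<open>psi_B\<close>, \<^const>\<open>psi_C\<close> and \<^const>\<open>psi_G\<close> are expanded only in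
  the second simplification, which keeps them as units so that their multiples cancel.\<close>

lemma psi_after_proto:
  fixes e :: "nat \<Rightarrow> 'a::group_add" and h :: "'a \<Rightarrow> 'a"
  assumes e_0: "e 0 = 0" and h_add: "\<And>u v. h (u + v) = h u + h v"
    and h_e: "\<And>i. i < 7 \<Longrightarrow> h (e i) = word_val e (psi_word m i) - word_val e (psi_word m 0)"
    and i: "i < 7"
  shows "h (word_val e (proto_word m i)) + word_val e (psi_word m 0) = e i"
proof -
  have h_0: "h 0 = 0"
    using h_e[of 0] e_0 by simp
  from i have "i = 0 \<or> i = 1 \<or> i = 2 \<or> i = 3 \<or> i = 4 \<or> i = 5 \<or> i = 6"
    by auto
  then show ?thesis
    unfolding hom_word_val[of h, OF h_add]
    by (elim disjE;
        simp add: proto_word_def Let_def word_rep_def[symmetric] h_0 h_e e_0 psi_word_def psi_gen_def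
          psi_tail_def group_normalize del: add_uminus_conv_diff;
        (simp add: psi_B_def psi_G_def psi_C_def e_0 group_normalize del: add_uminus_conv_diff)?)
qed

lemma proto_after_psi:
  fixes e :: "nat \<Rightarrow> 'a::group_add" and h :: "'a \<Rightarrow> 'a"
  assumes e_0: "e 0 = 0" and h_add: "\<And>u v. h (u + v) = h u + h v"
    and h_e: "\<And>i. i < 7 \<Longrightarrow> h (e i) = word_val e (proto_word m i) - word_val e (proto_word m 0)"
    and i: "i < 7"
  shows "h (word_val e (psi_word m i)) + word_val e (proto_word m 0) = e i"
proof -
  have h_0: "h 0 = 0"
    using h_e[of 0] e_0 by simp
  from i have "i = 0 \<or> i = 1 \<or> i = 2 \<or> i = 3 \<or> i = 4 \<or> i = 5 \<or> i = 6"
    by auto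
  then show ?thesis
    unfolding hom_word_val[of h, OF h_add]
    by (elim disjE;
        simp add: e_0 h_0 psi_word_def psi_gen_def psi_tail_def group_normalize
          del: add_uminus_conv_diff;
        (simp add: psi_B_def psi_G_def psi_C_def e_0 h_0 h_e proto_word_def Let_def
          word_rep_def[symmetric] group_normalize del: add_uminus_conv_diff)?)
qed

lemma homotopy_equivalence_graph_map_proto_word:
  "homotopy_equivalence P7_top P7_top (graph_map (proto_word m))"
proof -
  let ?phi = "graph_map (proto_word m)" and ?psi = "graph_map (psi_word m)"
  note phi = graph_map_words_proto_word[of m] and psi = graph_map_words_psi_word[of m]
  have "homotopic_with (\<lambda>x. True) P7_top P7_top (?psi \<circ> ?phi) id"
  proof (rule graph_map_comp_homotopic_id[OF psi phi])
    fix i :: nat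
    assume "i < 7"
    with edge_gen_0 pi1_map_add[OF based_map_graph_map[OF psi]] pi1_map_edge_gen[OF psi]
    show "pi1_map ?psi (word_val edge_gen (proto_word m i)) + word_val edge_gen (psi_word m 0) =
      edge_gen i"
      by (rule psi_after_proto)
  qed
  moreover have "homotopic_with (\<lambda>x. True) P7_top P7_top (?phi \<circ> ?psi) id"
  proof (rule graph_map_comp_homotopic_id[OF phi psi])
    fix i :: nat
    assume "i < 7"
    with edge_gen_0 pi1_map_add[OF based_map_graph_map[OF phi]] pi1_map_edge_gen[OF phi]
    show "pi1_map ?phi (word_val edge_gen (psi_word m i)) + word_val edge_gen (proto_word m 0) =
      edge_gen i"
      by (rule proto_after_psi)
  qed
  ultimately show ?thesis
    unfolding homotopy_equivalence_def
    using continuous_map_graph_map[OF phi] continuous_map_graph_map[OF psi] by blast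
qed

theorem mainTheorem4:
  fixes n :: nat
  assumes "odd n" and "0 < n"
  shows "homotopy_equivalence P7_top P7_top (proto_map n)"
proof (cases "n = 1")
  case True
  then show ?thesis
    by (auto simp: homotopy_equivalence_def proto_map_def intro!: exI[of _ id])
next
  case False
  then show ?thesis
    by (simp add: proto_map_def homotopy_equivalence_graph_map_proto_word)
qed

end
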